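(* Let $R$ be any associative algebra. Then the Hochschild homology $H_1(R,R_{ab})$ is isomorphic to $\Omega^1_{R_{ab}}$, the module of Kähler differentials of $R_{ab}$.
   Context: Algebras are associative unital $\mathbf{C}$-algebras. $R_{ab}=R/[R,R]$ is the quotient of $R$ by the two-sided ideal generated by all commutators $ab-ba$; it is regarded as an $R$-bimodule via the projection $R\to R_{ab}$. $H_\bullet(R,M)$ denotes Hochschild homology of $R$ with coefficients in an $R$-bimodule $M$. *)

theory Defs
  imports Complex_Main "HOL-Library.Poly_Mapping"
begin

definition is_C_algebra :: "(complex \<Rightarrow> 'a::ring_1 \<Rightarrow> 'a) \<Rightarrow> bool" where
  "is_C_algebra scl \<longleftrightarrow> vector_space scl \<and>
     (\<forall>c x y. scl c (x * y) = scl c x * y \<and> scl c (x * y) = x * scl c y)"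

text \<open>The two-sided ideal [R,R]R generated by all commutators; R_ab = R / comm_ideal.
  (This ideal is automatically a C-subspace.)\<close>

inductive_set comm_ideal :: "'a::ring_1 set" where
  ci_comm: "x * y - y * x \<in> comm_ideal"
| ci_zero: "0 \<in> comm_ideal"
| ci_add: "u \<in> comm_ideal \<Longrightarrow> v \<in> comm_ideal \<Longrightarrow> u + v \<in> comm_ideal"
| ci_left: "u \<in> comm_ideal \<Longrightarrow> r * u \<in> comm_ideal"
| ci_right: "u \<in> comm_ideal \<Longrightarrow> u * r \<in> comm_ideal"

text \<open>The free C-vector space on a type 'k is 'k =>0 complex.\<close>

definition fsc :: "complex \<Rightarrow> ('k \<Rightarrow>\<^sub>0 complex) \<Rightarrow> ('k \<Rightarrow>\<^sub>0 complex)" where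
  "fsc c p = Poly_Mapping.map (\<lambda>v. c * v) p"

definition gen :: "'k \<Rightarrow> ('k \<Rightarrow>\<^sub>0 complex)" where
  "gen k = Poly_Mapping.single k 1"

inductive_set fspan :: "('k \<Rightarrow>\<^sub>0 complex) set \<Rightarrow> ('k \<Rightarrow>\<^sub>0 complex) set" for S where
  fspan_base: "x \<in> S \<Longrightarrow> x \<in> fspan S"
| fspan_zero: "0 \<in> fspan S"
| fspan_add: "x \<in> fspan S \<Longrightarrow> y \<in> fspan S \<Longrightarrow> x + y \<in> fspan S"
| fspan_smult: "x \<in> fspan S \<Longrightarrow> fsc c x \<in> fspan S"

definition fext :: "(complex \<Rightarrow> 'v \<Rightarrow> 'v) \<Rightarrow> ('k \<Rightarrow> 'v::comm_monoid_add)
    \<Rightarrow> ('k \<Rightarrow>\<^sub>0 complex) \<Rightarrow> 'v" where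
  "fext sc g p = (\<Sum>k\<in>Poly_Mapping.keys p. sc (Poly_Mapping.lookup p k) (g k))"

text \<open>Bilinearity relations: R (x)_C R = F(RxR) / fspan bil2, and
  R (x)_C R (x)_C R = F(RxRxR) / fspan bil3.\<close>

definition bil2 :: "(complex \<Rightarrow> 'a::ring_1 \<Rightarrow> 'a) \<Rightarrow> ('a \<times> 'a \<Rightarrow>\<^sub>0 complex) set" where
  "bil2 scl =
     {gen (x + x', y) - gen (x, y) - gen (x', y) | x x' y. True} \<union>
     {gen (x, y + y') - gen (x, y) - gen (x, y') | x y y'. True} \<union>
     {gen (scl c x, y) - fsc c (gen (x, y)) | c x y. True} \<union>
     {gen (x, scl c y) - fsc c (gen (x, y)) | c x y. True}"

definition bil3 :: "(complex \<Rightarrow> 'a::ring_1 \<Rightarrow> 'a) \<Rightarrow> ('a \<times> 'a \<times> 'a \<Rightarrow>\<^sub>0 complex) set" where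
  "bil3 scl =
     {gen (x + x', y, z) - gen (x, y, z) - gen (x', y, z) | x x' y z. True} \<union>
     {gen (x, y + y', z) - gen (x, y, z) - gen (x, y', z) | x y y' z. True} \<union>
     {gen (x, y, z + z') - gen (x, y, z) - gen (x, y, z') | x y z z'. True} \<union>
     {gen (scl c x, y, z) - fsc c (gen (x, y, z)) | c x y z. True} \<union>
     {gen (x, scl c y, z) - fsc c (gen (x, y, z)) | c x y z. True} \<union>
     {gen (x, y, scl c z) - fsc c (gen (x, y, z)) | c x y z. True}"

text \<open>C_0 = R_ab = R / comm_ideal.
  C_1 = R_ab (x) R = F(RxR) / hoch_N1, where a generator gen (m, a) stands for [m] (x) a.
  C_2 = R_ab (x) R (x) R = F(RxRxR) / hoch_N2.\<close>

definition hoch_N1 :: "(complex \<Rightarrow> 'a::ring_1 \<Rightarrow> 'a) \<Rightarrow> ('a \<times> 'a \<Rightarrow>\<^sub>0 complex) set" where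
  "hoch_N1 scl = fspan (bil2 scl \<union> {gen (i, a) | i a. i \<in> comm_ideal})"

definition hoch_N2 :: "(complex \<Rightarrow> 'a::ring_1 \<Rightarrow> 'a) \<Rightarrow> ('a \<times> 'a \<times> 'a \<Rightarrow>\<^sub>0 complex) set" where
  "hoch_N2 scl = fspan (bil3 scl \<union> {gen (i, a, b) | i a b. i \<in> comm_ideal})"

text \<open>Hochschild boundaries (lifted to the free vector spaces):
  b_1 (m (x) a) = m a - a m  (in R, then projected to R_ab),
  b_2 (m (x) a (x) b) = m a (x) b - m (x) a b + b m (x) a.\<close>

definition hoch_b1 :: "(complex \<Rightarrow> 'a::ring_1 \<Rightarrow> 'a) \<Rightarrow> ('a \<times> 'a \<Rightarrow>\<^sub>0 complex) \<Rightarrow> 'a" where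
  "hoch_b1 scl = fext scl (\<lambda>(m, a). m * a - a * m)"

definition hoch_b2 :: "('a::ring_1 \<times> 'a \<times> 'a \<Rightarrow>\<^sub>0 complex) \<Rightarrow> ('a \<times> 'a \<Rightarrow>\<^sub>0 complex)" where
  "hoch_b2 = fext fsc (\<lambda>(m, a, b). gen (m * a, b) - gen (m, a * b) + gen (b * m, a))"

text \<open>H_1(R, R_ab) = ker b_1 / im b_2 = hoch_Z1 / hoch_B1, where both are taken as
  preimages in F(RxR) of the corresponding subspaces of C_1.\<close>

definition hoch_Z1 :: "(complex \<Rightarrow> 'a::ring_1 \<Rightarrow> 'a) \<Rightarrow> ('a \<times> 'a \<Rightarrow>\<^sub>0 complex) set" where
  "hoch_Z1 scl = {z. hoch_b1 scl z \<in> comm_ideal}"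

definition hoch_B1 :: "(complex \<Rightarrow> 'a::ring_1 \<Rightarrow> 'a) \<Rightarrow> ('a \<times> 'a \<Rightarrow>\<^sub>0 complex) set" where
  "hoch_B1 scl = {hoch_b2 w + n | w n. n \<in> hoch_N1 scl}"

text \<open>Omega^1_A = (A (x)_C A) / span {a (x) bc - ab (x) c - ac (x) b}, with a (x) b standing for a db.
  For A = R_ab this is F(RxR) / kaehler_D.\<close>

definition kaehler_D :: "(complex \<Rightarrow> 'a::ring_1 \<Rightarrow> 'a) \<Rightarrow> ('a \<times> 'a \<Rightarrow>\<^sub>0 complex) set" where
  "kaehler_D scl = fspan (bil2 scl \<union> {gen (i, a) | i a. i \<in> comm_ideal}
       \<union> {gen (a, i) | i a. i \<in> comm_ideal}
       \<union> {gen (a, b * c) - gen (a * b, c) - gen (a * c, b) | a b c. True})"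

text \<open>R (hence R_ab) acts on F(RxR) through the first factor: r . (m (x) a) = r m (x) a,
  resp. r . (a db) = r a db.  This induces the R_ab-module structures on H_1(R,R_ab) and on
  Omega^1_{R_ab}.\<close>

definition act1 :: "'a::ring_1 \<Rightarrow> ('a \<times> 'a \<Rightarrow>\<^sub>0 complex) \<Rightarrow> ('a \<times> 'a \<Rightarrow>\<^sub>0 complex)" where
  "act1 r = fext fsc (\<lambda>(m, a). gen (r * m, a))"

text \<open>Z/B ~= F(K')/D as modules (over C, compatible with the actions actZ, actV of R):
  an isomorphism of quotients is given by a (C-linear) map f of the ambient free spaces
  with f(B) <= D, inducing an injective and surjective, R-equivariant map Z/B -> F(K')/D.\<close>

definition subquot_iso ::
  "('r \<Rightarrow> ('k \<Rightarrow>\<^sub>0 complex) \<Rightarrow> ('k \<Rightarrow>\<^sub>0 complex)) \<Rightarrow> ('k \<Rightarrow>\<^sub>0 complex) set \<Rightarrow> ('k \<Rightarrow>\<^sub>0 complex) set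
   \<Rightarrow> ('r \<Rightarrow> ('l \<Rightarrow>\<^sub>0 complex) \<Rightarrow> ('l \<Rightarrow>\<^sub>0 complex)) \<Rightarrow> ('l \<Rightarrow>\<^sub>0 complex) set \<Rightarrow> bool" where
  "subquot_iso actZ Z B actV D \<longleftrightarrow>
     (\<exists>g. let f = fext fsc g in
        (\<forall>z\<in>B. f z \<in> D) \<and>
        (\<forall>z\<in>Z. f z \<in> D \<longrightarrow> z \<in> B) \<and>
        (\<forall>w. \<exists>z\<in>Z. w - f z \<in> D) \<and>
        (\<forall>r. \<forall>z\<in>Z. f (actZ r z) - actV r (f z) \<in> D))"

end

theory Submission
  imports Defs
begin

text \<open>Bilinearity of the multiplication makes b_1 take values in the commutator ideal,
  so every 1-chain is a cycle and H_1(R, R_ab) is R_ab (x) R modulo the image of b_2.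
  Modulo the relations of R_ab (x) R, the boundary m a (x) b - m (x) a b + b m (x) a is
  minus the Leibniz relation m d(ab) = ma db + mb da. Conversely the Leibniz relation
  forces m d(xy - yx) = 0, as d(xy) and d(yx) both expand to x dy + y dx; by induction
  over the commutator ideal the relations of Omega^1 killing d of that ideal are
  therefore redundant. Hence both subquotients of the free vector space on R x R coincide, and
  the identity map is the isomorphism.\<close>

abbreviation ideal_left_gens :: "('a::ring_1 \<times> 'a \<Rightarrow>\<^sub>0 complex) set" where
  "ideal_left_gens \<equiv> {gen (i, a) | i a. i \<in> comm_ideal}"

abbreviation ideal_right_gens :: "('a::ring_1 \<times> 'a \<Rightarrow>\<^sub>0 complex) set" where
  "ideal_right_gens \<equiv> {gen (a, i) | i a. i \<in> comm_ideal}"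

abbreviation leibniz_rels :: "('a::ring_1 \<times> 'a \<Rightarrow>\<^sub>0 complex) set" where
  "leibniz_rels \<equiv> {gen (a, b * c) - gen (a * b, c) - gen (a * c, b) | a b c. True}"

lemma lookup_fsc [simp]: "Poly_Mapping.lookup (fsc c p) k = c * Poly_Mapping.lookup p k"
  by (simp add: fsc_def map.rep_eq when_def)

lemma fsc_add: "fsc c (p + q) = fsc c p + fsc c q"
  by (rule poly_mapping_eqI) (simp add: lookup_add algebra_simps)

lemma fsc_add_left: "fsc (a + b) p = fsc a p + fsc b p"
  by (rule poly_mapping_eqI) (simp add: lookup_add algebra_simps)

lemma fsc_mult: "fsc (a * b) p = fsc a (fsc b p)"
  by (rule poly_mapping_eqI) simp

lemma fsc_0 [simp]: "fsc 0 p = 0"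
  by (rule poly_mapping_eqI) simp

lemma fsc_1 [simp]: "fsc 1 p = p"
  by (rule poly_mapping_eqI) simp

lemma fsc_minus_one: "fsc (-1) p = - p"
  by (rule poly_mapping_eqI) simp

lemma fsc_sum: "fsc c (sum f K) = (\<Sum>k\<in>K. fsc c (f k))"
  by (rule poly_mapping_eqI) (simp add: lookup_sum sum_distrib_left)

lemma keys_fsc: "Poly_Mapping.keys (fsc c p) \<subseteq> Poly_Mapping.keys p"
  by (auto simp: in_keys_iff)

lemma fext_eq_sum_superset:
  assumes "finite K" "Poly_Mapping.keys p \<subseteq> K"
  shows "fext fsc g p = (\<Sum>k\<in>K. fsc (Poly_Mapping.lookup p k) (g k))"
  unfolding fext_def by (rule sum.mono_neutral_left) (auto simp: assms in_keys_iff)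

lemma fext_add: "fext fsc g (p + q) = fext fsc g p + fext fsc g q"
proof -
  let ?K = "Poly_Mapping.keys p \<union> Poly_Mapping.keys q"
  have "fext fsc g (p + q) = (\<Sum>k\<in>?K. fsc (Poly_Mapping.lookup (p + q) k) (g k))"
    by (rule fext_eq_sum_superset) (auto dest: set_mp[OF keys_add])
  also have "\<dots> = (\<Sum>k\<in>?K. fsc (Poly_Mapping.lookup p k) (g k))
                 + (\<Sum>k\<in>?K. fsc (Poly_Mapping.lookup q k) (g k))"
    by (simp add: lookup_add fsc_add_left sum.distrib)
  also have "\<dots> = fext fsc g p + fext fsc g q"
    by (simp add: fext_eq_sum_superset[symmetric])
  finally show ?thesis .
qed

lemma fext_fsc: "fext fsc g (fsc c p) = fsc c (fext fsc g p)"
proof -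
  have "fext fsc g (fsc c p)
      = (\<Sum>k\<in>Poly_Mapping.keys p. fsc (Poly_Mapping.lookup (fsc c p) k) (g k))"
    by (rule fext_eq_sum_superset) (auto simp: keys_fsc[THEN subsetD])
  then show ?thesis
    by (simp add: fext_def fsc_sum fsc_mult)
qed

lemma fext_zero [simp]: "fext sc g 0 = 0"
  by (simp add: fext_def)

lemma fext_gen [simp]: "fext fsc g (gen k) = g k"
  by (simp add: fext_def gen_def)

lemma fext_fsc_gen [simp]: "fext fsc gen p = p"
proof (rule poly_mapping_eqI)
  fix j
  have "Poly_Mapping.lookup (fext fsc gen p) j
      = (\<Sum>k\<in>Poly_Mapping.keys p. Poly_Mapping.lookup p k * (1 when k = j))"
    by (simp add: fext_def lookup_sum gen_def lookup_single)
  also have "\<dots> = (\<Sum>k\<in>Poly_Mapping.keys p. if k = j then Poly_Mapping.lookup p k else 0)"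
    by (rule sum.cong) (auto simp: when_def)
  also have "\<dots> = Poly_Mapping.lookup p j"
    by (simp add: sum.delta' in_keys_iff)
  finally show "Poly_Mapping.lookup (fext fsc gen p) j = Poly_Mapping.lookup p j" .
qed

lemma fspan_least:
  assumes "S \<subseteq> V" "0 \<in> V"
    and "\<And>x y. x \<in> V \<Longrightarrow> y \<in> V \<Longrightarrow> x + y \<in> V"
    and "\<And>c x. x \<in> V \<Longrightarrow> fsc c x \<in> V"
  shows "fspan S \<subseteq> V"
proof
  fix x assume "x \<in> fspan S"
  then show "x \<in> V"
    by induction (use assms in auto)
qed

lemma fspan_subset: "S \<subseteq> fspan T \<Longrightarrow> fspan S \<subseteq> fspan T"
  by (rule fspan_least) (auto intro: fspan.intros)

lemma fspan_uminus: "x \<in> fspan S \<Longrightarrow> - x \<in> fspan S"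
  by (metis fsc_minus_one fspan_smult)

lemma fspan_diff: "x \<in> fspan S \<Longrightarrow> y \<in> fspan S \<Longrightarrow> x - y \<in> fspan S"
  by (metis diff_conv_add_uminus fspan_add fspan_uminus)

lemma fspan_sum: "finite K \<Longrightarrow> (\<And>k. k \<in> K \<Longrightarrow> f k \<in> fspan S) \<Longrightarrow> sum f K \<in> fspan S"
  by (induction K rule: finite_induct) (auto intro: fspan.intros)

lemma fext_in_fspan: "(\<And>k. g k \<in> fspan S) \<Longrightarrow> fext fsc g p \<in> fspan S"
  unfolding fext_def by (rule fspan_sum) (auto intro: fspan_smult)

lemma comm_ideal_sum:
  "finite K \<Longrightarrow> (\<And>k. k \<in> K \<Longrightarrow> f k \<in> comm_ideal) \<Longrightarrow> sum f K \<in> comm_ideal"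
  by (induction K rule: finite_induct) (auto intro: comm_ideal.intros)

lemma bil2_left: "gen (x + x', y) - gen (x, y) - gen (x', y) \<in> bil2 scl"
  unfolding bil2_def by (intro UnI1) blast

lemma bil2_right: "gen (x, y + y') - gen (x, y) - gen (x, y') \<in> bil2 scl"
  unfolding bil2_def by (rule UnI1, rule UnI1, rule UnI2) blast

lemma hoch_Z1_eq_UNIV:
  assumes "is_C_algebra scl"
  shows "hoch_Z1 scl = UNIV"
proof -
  have vs: "vector_space scl"
    and bilinear: "\<And>c x y. scl c (x * y) = scl c x * y \<and> scl c (x * y) = x * scl c y"
    using assms unfolding is_C_algebra_def by blast+
  have "scl c (m * a - a * m) \<in> comm_ideal" for c m a
  proof -
    have "scl c (m * a - a * m) = scl c (m * a) - scl c (a * m)"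
      by (rule module.scale_right_diff_distrib[OF vs[folded module_iff_vector_space]])
    also have "\<dots> = scl c m * a - a * scl c m"
      using bilinear by metis
    finally show ?thesis
      by (simp add: comm_ideal.ci_comm)
  qed
  then show ?thesis
    unfolding hoch_Z1_def hoch_b1_def fext_def
    by (auto intro!: comm_ideal_sum split: prod.splits)
qed

lemma hoch_N1_gen_diff:
  assumes "x - x' \<in> comm_ideal"
  shows "gen (x, y) - gen (x', y) \<in> hoch_N1 scl"
proof -
  have bil: "gen ((x - x') + x', y) - gen (x - x', y) - gen (x', y) \<in> hoch_N1 scl"
    unfolding hoch_N1_def by (intro fspan_base UnI1 bil2_left)
  have ideal: "gen (x - x', y) \<in> hoch_N1 scl"
    unfolding hoch_N1_def using assms by (intro fspan_base UnI2) blast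
  have "gen (x, y) - gen (x', y)
      = (gen ((x - x') + x', y) - gen (x - x', y) - gen (x', y)) + gen (x - x', y)"
    by simp
  also have "\<dots> \<in> hoch_N1 scl"
    using bil ideal unfolding hoch_N1_def by (rule fspan_add)
  finally show ?thesis .
qed

lemma hoch_b2_gen:
  "hoch_b2 (gen (m, a, b))
     = - (gen (m, a * b) - gen (m * a, b) - gen (m * b, a)) + (gen (b * m, a) - gen (m * b, a))"
  by (simp add: hoch_b2_def)

lemma hoch_B1_add: "x \<in> hoch_B1 scl \<Longrightarrow> y \<in> hoch_B1 scl \<Longrightarrow> x + y \<in> hoch_B1 scl"
proof -
  assume "x \<in> hoch_B1 scl" "y \<in> hoch_B1 scl"
  then obtain w n w' n' where "x = hoch_b2 w + n" "n \<in> hoch_N1 scl"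
      and "y = hoch_b2 w' + n'" "n' \<in> hoch_N1 scl"
    unfolding hoch_B1_def by blast
  then have "x + y = hoch_b2 (w + w') + (n + n')" "n + n' \<in> hoch_N1 scl"
    by (auto simp: hoch_b2_def fext_add hoch_N1_def intro: fspan_add)
  then show ?thesis
    unfolding hoch_B1_def by blast
qed

lemma hoch_B1_fsc: "x \<in> hoch_B1 scl \<Longrightarrow> fsc c x \<in> hoch_B1 scl"
proof -
  assume "x \<in> hoch_B1 scl"
  then obtain w n where "x = hoch_b2 w + n" "n \<in> hoch_N1 scl"
    unfolding hoch_B1_def by blast
  then have "fsc c x = hoch_b2 (fsc c w) + fsc c n" "fsc c n \<in> hoch_N1 scl"
    by (auto simp: hoch_b2_def fext_fsc fsc_add hoch_N1_def intro: fspan_smult)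
  then show ?thesis
    unfolding hoch_B1_def by blast
qed

lemma hoch_N1_subset_B1: "hoch_N1 scl \<subseteq> hoch_B1 scl"
proof
  fix n assume "n \<in> hoch_N1 scl"
  moreover have "n = hoch_b2 0 + n"
    by (simp add: hoch_b2_def)
  ultimately show "n \<in> hoch_B1 scl"
    unfolding hoch_B1_def by blast
qed

lemma fspan_subset_hoch_B1: "S \<subseteq> hoch_B1 scl \<Longrightarrow> fspan S \<subseteq> hoch_B1 scl"
  by (rule fspan_least)
    (use hoch_N1_subset_B1 in \<open>auto simp: hoch_N1_def intro: fspan_zero hoch_B1_add hoch_B1_fsc\<close>)

lemma hoch_B1_uminus: "x \<in> hoch_B1 scl \<Longrightarrow> - x \<in> hoch_B1 scl"
  using hoch_B1_fsc[of x scl "-1"] by (simp add: fsc_minus_one)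

lemma hoch_b2_in_B1: "hoch_b2 w \<in> hoch_B1 scl"
  unfolding hoch_B1_def hoch_N1_def by (force intro: fspan_zero)

lemma leibniz_rels_subset_hoch_B1: "leibniz_rels \<subseteq> hoch_B1 scl"
proof clarify
  fix a b c :: 'a
  have "gen (c * a, b) - gen (a * c, b) \<in> hoch_B1 scl"
    using hoch_N1_subset_B1 hoch_N1_gen_diff[OF comm_ideal.ci_comm] by blast
  with hoch_B1_uminus[OF hoch_b2_in_B1]
  have "- hoch_b2 (gen (a, b, c)) + (gen (c * a, b) - gen (a * c, b)) \<in> hoch_B1 scl"
    by (rule hoch_B1_add)
  then show "gen (a, b * c) - gen (a * b, c) - gen (a * c, b) \<in> hoch_B1 scl"
    by (simp add: hoch_b2_gen)
qed


lemma gen_ideal_right_in_fspan: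
  assumes "i \<in> comm_ideal"
  shows "gen (a, i) \<in> fspan (bil2 scl \<union> ideal_left_gens \<union> leibniz_rels)"
proof -
  let ?V = "fspan (bil2 scl \<union> ideal_left_gens \<union> leibniz_rels)"
  have bil: "gen (a, y + y') - gen (a, y) - gen (a, y') \<in> ?V" for a y y' :: 'a
    by (intro fspan_base UnI1 bil2_right)
  have leibniz: "gen (a, b * c) - gen (a * b, c) - gen (a * c, b) \<in> ?V" for a b c :: 'a
    by (rule fspan_base) blast
  have left: "gen (j, b) \<in> ?V" if "j \<in> comm_ideal" for j b :: 'a
    using that by (intro fspan_base) blast
  from assms show ?thesis
  proof (induction i arbitrary: a rule: comm_ideal.induct)
    case (ci_comm x y)
    have "gen (a, x * y - y * x)
        = (gen (a, x * y) - gen (a * x, y) - gen (a * y, x))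
          - (gen (a, y * x) - gen (a * y, x) - gen (a * x, y))
          - (gen (a, (x * y - y * x) + y * x) - gen (a, x * y - y * x) - gen (a, y * x))"
      by simp
    also have "\<dots> \<in> ?V"
      by (intro fspan_diff leibniz bil)
    finally show ?case .
  next
    case ci_zero
    have "gen (a, 0::'a) = - (gen (a, 0 + 0) - gen (a, 0) - gen (a, 0))"
      by simp
    also have "\<dots> \<in> ?V"
      by (intro fspan_uminus bil)
    finally show ?case .
  next
    case (ci_add u v)
    have "gen (a, u + v) = (gen (a, u + v) - gen (a, u) - gen (a, v)) + gen (a, u) + gen (a, v)"
      by simp
    also have "\<dots> \<in> ?V"
      by (intro fspan_add bil ci_add.IH)
    finally show ?case .
  next
    case (ci_left u r)
    have "gen (a, r * u) = (gen (a, r * u) - gen (a * r, u) - gen (a * u, r))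
        + gen (a * r, u) + gen (a * u, r)"
      by simp
    also have "\<dots> \<in> ?V"
      by (intro fspan_add leibniz ci_left.IH left comm_ideal.ci_left ci_left.hyps)
    finally show ?case .
  next
    case (ci_right u r)
    have "gen (a, u * r) = (gen (a, u * r) - gen (a * u, r) - gen (a * r, u))
        + gen (a * u, r) + gen (a * r, u)"
      by simp
    also have "\<dots> \<in> ?V"
      by (intro fspan_add leibniz ci_right.IH left comm_ideal.ci_left ci_right.hyps)
    finally show ?case .
  qed
qed

lemma kaehler_D_eq: "kaehler_D scl = fspan (bil2 scl \<union> ideal_left_gens \<union> leibniz_rels)"
proof
  show "kaehler_D scl \<subseteq> fspan (bil2 scl \<union> ideal_left_gens \<union> leibniz_rels)"
  proof (unfold kaehler_D_def, rule fspan_subset)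
    have "ideal_right_gens \<subseteq> fspan (bil2 scl \<union> ideal_left_gens \<union> leibniz_rels)"
      using gen_ideal_right_in_fspan by blast
    then show "bil2 scl \<union> ideal_left_gens \<union> ideal_right_gens \<union> leibniz_rels
        \<subseteq> fspan (bil2 scl \<union> ideal_left_gens \<union> leibniz_rels)"
      by (blast intro: fspan_base)
  qed
  show "fspan (bil2 scl \<union> ideal_left_gens \<union> leibniz_rels) \<subseteq> kaehler_D scl"
    unfolding kaehler_D_def by (rule fspan_subset) (blast intro: fspan_base)
qed

lemma kaehler_D_subset_hoch_B1: "kaehler_D scl \<subseteq> hoch_B1 scl"
proof -
  have "bil2 scl \<union> ideal_left_gens \<subseteq> hoch_B1 scl"
    using hoch_N1_subset_B1 unfolding hoch_N1_def by (blast intro: fspan_base)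
  with leibniz_rels_subset_hoch_B1 show ?thesis
    unfolding kaehler_D_eq by (intro fspan_subset_hoch_B1) blast
qed

lemma hoch_N1_subset_kaehler_D: "hoch_N1 scl \<subseteq> kaehler_D scl"
  unfolding hoch_N1_def kaehler_D_def by (rule fspan_subset) (blast intro: fspan_base)

lemma hoch_b2_in_kaehler_D: "hoch_b2 w \<in> kaehler_D scl"
proof -
  have "hoch_b2 (gen (m, a, b)) \<in> kaehler_D scl" for m a b :: 'a
  proof -
    have "gen (m, a * b) - gen (m * a, b) - gen (m * b, a) \<in> kaehler_D scl"
      unfolding kaehler_D_def by (rule fspan_base) blast
    moreover have "gen (b * m, a) - gen (m * b, a) \<in> kaehler_D scl"
      using hoch_N1_subset_kaehler_D hoch_N1_gen_diff[OF comm_ideal.ci_comm] by blast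
    ultimately show ?thesis
      unfolding hoch_b2_gen kaehler_D_def by (intro fspan_add fspan_uminus)
  qed
  then show ?thesis
    unfolding hoch_b2_def kaehler_D_def by (intro fext_in_fspan) (auto simp: hoch_b2_def split: prod.split)
qed

lemma hoch_B1_eq_kaehler_D: "hoch_B1 scl = kaehler_D scl"
proof
  show "hoch_B1 scl \<subseteq> kaehler_D scl"
  proof clarify
    fix x assume "x \<in> hoch_B1 scl"
    then obtain w n where "x = hoch_b2 w + n" "n \<in> hoch_N1 scl"
      unfolding hoch_B1_def by blast
    with hoch_b2_in_kaehler_D hoch_N1_subset_kaehler_D show "x \<in> kaehler_D scl"
      unfolding kaehler_D_def by (blast intro: fspan_add)
  qed
qed (rule kaehler_D_subset_hoch_B1)

theorem proposition1p3p3: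
  fixes scl :: "complex \<Rightarrow> 'a::ring_1 \<Rightarrow> 'a"
  assumes "is_C_algebra scl"
  shows "subquot_iso act1 (hoch_Z1 scl) (hoch_B1 scl) act1 (kaehler_D scl)"
  unfolding subquot_iso_def Let_def
proof (intro exI[of _ gen] conjI)
  show "\<forall>w. \<exists>z\<in>hoch_Z1 scl. w - fext fsc gen z \<in> kaehler_D scl"
  proof
    fix w
    have "w - fext fsc gen w \<in> kaehler_D scl"
      by (simp add: kaehler_D_def fspan_zero)
    then show "\<exists>z\<in>hoch_Z1 scl. w - fext fsc gen z \<in> kaehler_D scl"
      unfolding hoch_Z1_eq_UNIV[OF assms] by blast
  qed
qed (simp_all add: hoch_B1_eq_kaehler_D kaehler_D_def fspan_zero)

end
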